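(* Let $S=\{p_1,\dots,p_n\}$ be a set of point sites in $\mathbb{R}^d$ with an admissible system of distance functions $\{d_{p_i}\}$, let $C\subset\mathbb{R}^d$ be a bounded open set, and let $\lambda_1,\dots,\lambda_n>0$ with $\sum_i\lambda_i=\mu(C)$. Let $w=(w_1,\dots,w_n)$ be a weight vector with $\mu(C\cap\mathrm{VR}_w(p_i,S))=\lambda_i$ for $i=1,\dots,n$, and let $f_w:C\to S$ be a map with $f_w(z)=p_i$ for $z\in C_i:=C\cap\mathrm{VR}_w(p_i,S)$ (on the remaining points $C\cap V_w(S)$, $f_w$ assigns some site $p_i$ minimizing $d_{p_i}(z)-w_i$). Then $f_w\in F_\Lambda$ and $f_w$ minimizes $$\mathrm{cost}(f)=\int_C d_{f(z)}(z)\,\mathrm{d}\mu(z)$$ over all $f\in F_\Lambda$. Moreover, any $f\in F_\Lambda$ with $\mathrm{cost}(f)=\mathrm{cost}(f_w)$ coincides with $f_w$ outside a set of $\mu$-measure zero.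
   Context: $\mu$ is a measure defined on all Lebesgue-measurable subsets of $\mathbb{R}^d$ such that $\mu$ and $d$-dimensional Lebesgue measure are mutually absolutely continuous. Each site $p\in S$ has a continuous function $d_p:\mathbb{R}^d\to\mathbb{R}_{\ge 0}$. For $p\neq q\in S$ and $\gamma\in\mathbb{R}$ let $R_\gamma(p,q)=\{z\in\mathbb{R}^d : d_p(z)-d_q(z)<\gamma\}$. The system $\{d_p\}_{p\in S}$ is called admissible if for all $p\neq q\in S$ and every bounded open set $C\subset\mathbb{R}^d$ there exist real numbers $m_{pq}<M_{pq}$ such that the function $\gamma\mapsto\mu(C\cap R_\gamma(p,q))$ is continuous on $\mathbb{R}$ and increases (monotonically) from $0$ to $\mu(C)$ as $\gamma$ grows from $m_{pq}$ to $M_{pq}$; moreover $C\cap R_\gamma(p,q)=\emptyset$ for $\gamma\le m_{pq}$ and $C\subset R_\gamma(p,q)$ for $\gamma\ge M_{pq}$. For a weight vector $w$, $\mathrm{VR}_w(p_i,S)=\bigcap_{j\neq i}R_{w_i-w_j}(p_i,p_j)$ (points $z$ with $d_{p_i}(z)-w_i<d_{p_j}(z)-w_j$ for all $j\neq i$), and $V_w(S)=\mathbb{R}^d\setminus\bigcup_i\mathrm{VR}_w(p_i,S)$. $F_\Lambda$ denotes the set of $\mu$-measurable maps $f:C\to S$ (each $f^{-1}(p_i)$ measurable) with $\mu(f^{-1}(p_i))=\lambda_i$ for $i=1,\dots,n$. *)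

theory Defs
  imports "HOL-Analysis.Analysis"
begin

text \<open>Sites are indexed by i in {1..n} via p :: nat => 'a; the distance function of
  site q is D q :: 'a => real.\<close>

definition Rgam :: "('a \<Rightarrow> 'a \<Rightarrow> real) \<Rightarrow> 'a \<Rightarrow> 'a \<Rightarrow> real \<Rightarrow> 'a set" where
  "Rgam D p q \<gamma> = {z. D p z - D q z < \<gamma>}"

definition admissible :: "'a::euclidean_space measure \<Rightarrow> 'a set \<Rightarrow> ('a \<Rightarrow> 'a \<Rightarrow> real) \<Rightarrow> bool" where
  "admissible \<mu> S D \<longleftrightarrow>
    (\<forall>p\<in>S. \<forall>q\<in>S. p \<noteq> q \<longrightarrow>
      (\<forall>C. bounded C \<and> open C \<longrightarrow>
        (\<exists>m M. m < M
           \<and> continuous_on UNIV (\<lambda>\<gamma>. emeasure \<mu> (C \<inter> Rgam D p q \<gamma>))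
           \<and> mono_on {m..M} (\<lambda>\<gamma>. emeasure \<mu> (C \<inter> Rgam D p q \<gamma>))
           \<and> (\<forall>\<gamma>\<le>m. C \<inter> Rgam D p q \<gamma> = {})
           \<and> (\<forall>\<gamma>\<ge>M. C \<subseteq> Rgam D p q \<gamma>))))"

definition VR :: "('a \<Rightarrow> 'a \<Rightarrow> real) \<Rightarrow> (nat \<Rightarrow> 'a) \<Rightarrow> nat \<Rightarrow> (nat \<Rightarrow> real) \<Rightarrow> nat \<Rightarrow> 'a set" where
  "VR D p n w i = (\<Inter>j\<in>{1..n} - {i}. Rgam D (p i) (p j) (w i - w j))"

definition Vw :: "('a \<Rightarrow> 'a \<Rightarrow> real) \<Rightarrow> (nat \<Rightarrow> 'a) \<Rightarrow> nat \<Rightarrow> (nat \<Rightarrow> real) \<Rightarrow> 'a set" where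
  "Vw D p n w = UNIV - (\<Union>i\<in>{1..n}. VR D p n w i)"

definition F_Lambda :: "'a measure \<Rightarrow> 'a set \<Rightarrow> (nat \<Rightarrow> 'a) \<Rightarrow> nat \<Rightarrow> (nat \<Rightarrow> real) \<Rightarrow> ('a \<Rightarrow> 'a) set" where
  "F_Lambda \<mu> C p n lam = {f. (\<forall>z\<in>C. f z \<in> p ` {1..n}) \<and>
     (\<forall>i\<in>{1..n}. {z\<in>C. f z = p i} \<in> sets \<mu> \<and> emeasure \<mu> {z\<in>C. f z = p i} = ennreal (lam i))}"

definition cost :: "'a measure \<Rightarrow> ('a \<Rightarrow> 'a \<Rightarrow> real) \<Rightarrow> 'a set \<Rightarrow> ('a \<Rightarrow> 'a) \<Rightarrow> ennreal" where
  "cost \<mu> D C f = (\<integral>\<^sup>+ z\<in>C. ennreal (D (f z) z) \<partial>\<mu>)"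

end

theory Submission
  imports Defs
begin

(* Idea: the weights w act as Lagrange multipliers for the capacity constraints.  For every
   admissible assignment f (cells of measure lam i) the "weight integral" of z |-> w_{f(z)}
   over C equals sum_i lam_i w_i, independently of f.  Hence
     cost f - cost fw = integral over C of [(d_{f(z)}(z) - w_{f(z)}) - (d_{fw(z)}(z) - w_{fw(z)})],
   and the integrand is pointwise nonnegative because fw(z) minimises d_i(z) - w_i.  If the costs agree the integrand vanishes almost everywhere; off the set Vw
   (which is null, since the open power cells already exhaust the measure of C) the minimiser
   is unique, so f = fw almost everywhere on C.

   Admissibility of the
   distance functions is what guarantees the existence of suitable weights in the paper; the
   optimality statement itself does not need it. *)

section \<open>Power cells\<close>

lemma VR_less:
  assumes "z \<in> VR D p n w i" "j \<in> {1..n}" "j \<noteq> i"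
  shows "D (p i) z - w i < D (p j) z - w j"
proof -
  have "D (p i) z - D (p j) z < w i - w j"
    using assms unfolding VR_def Rgam_def by auto
  then show ?thesis by linarith
qed

lemma VR_minimal:
  assumes "z \<in> VR D p n w i" "j \<in> {1..n}"
  shows "D (p i) z - w i \<le> D (p j) z - w j"
  using VR_less[OF assms] by (cases "j = i") auto

lemma VR_unique_minimizer:
  assumes "z \<in> VR D p n w i" "j \<in> {1..n}" "D (p j) z - w j \<le> D (p i) z - w i"
  shows "j = i"
  using VR_less[OF assms(1,2)] assms(3) by force

lemma VR_disjoint:
  assumes "i \<in> {1..n}" "j \<in> {1..n}" "i \<noteq> j"
  shows "VR D p n w i \<inter> VR D p n w j = {}"
  using VR_less[of _ D p n w i j] VR_less[of _ D p n w j i] assms by force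

lemma open_VR:
  assumes "\<And>j. j \<in> {1..n} \<Longrightarrow> continuous_on UNIV (D (p j))" "i \<in> {1..n}"
  shows "open (VR D p n w i)"
proof -
  have "open {z. D (p i) z - D (p j) z < w i - w j}" if "j \<in> {1..n}" for j
  proof -
    have "continuous_on UNIV (\<lambda>z. D (p i) z - D (p j) z)"
      using assms that by (intro continuous_on_diff) auto
    then show ?thesis
      by (intro open_Collect_less) (auto intro: continuous_on_const)
  qed
  then show ?thesis
    unfolding VR_def Rgam_def by (intro open_INT) auto
qed

section \<open>Measure theory\<close>

lemma null_set_outside_full_cells:
  assumes "finite I" "C \<in> sets M" "emeasure M C < \<infinity>"
    and cells: "\<And>i. i \<in> I \<Longrightarrow> B i \<in> sets M" "\<And>i. i \<in> I \<Longrightarrow> B i \<subseteq> C"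
    and disj: "disjoint_family_on B I"
    and full: "emeasure M C = (\<Sum>i\<in>I. emeasure M (B i))"
  shows "C - (\<Union>i\<in>I. B i) \<in> null_sets M"
proof -
  have U: "(\<Union>i\<in>I. B i) \<in> sets M" "(\<Union>i\<in>I. B i) \<subseteq> C"
    using assms(1) cells by auto
  have "emeasure M (\<Union>i\<in>I. B i) = emeasure M C"
    using full sum_emeasure[of B I M] assms(1) cells disj by (auto simp: image_subset_iff)
  then have "emeasure M (C - (\<Union>i\<in>I. B i)) = 0"
    using emeasure_Diff[OF _ assms(2) U] assms(3) by simp
  then show ?thesis
    using U assms(2) by auto
qed

lemma null_subset_lebesgue_like:
  fixes \<mu> :: "'a::euclidean_space measure"
  assumes "sets \<mu> = sets lebesgue" "null_sets \<mu> = null_sets lebesgue"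
    and "N \<in> null_sets \<mu>" "A \<subseteq> N"
  shows "A \<in> null_sets \<mu>"
  using null_sets_completion_subset[of A N lborel] assms by simp

lemma borel_measurable_continuous_lebesgue_like:
  fixes g :: "'a::euclidean_space \<Rightarrow> real"
  assumes "sets \<mu> = sets lebesgue" "continuous_on UNIV g"
  shows "g \<in> borel_measurable \<mu>"
  using assms by (metis continuous_imp_measurable_on measurable_cong_sets
        measurable_on_imp_borel_measurable_lebesgue_UNIV)

lemma continuous_bounded_on_bounded:
  fixes g :: "'a::euclidean_space \<Rightarrow> real"
  assumes "bounded C" "continuous_on UNIV g"
  shows "\<exists>B. \<forall>z\<in>C. \<bar>g z\<bar> \<le> B"
proof -
  have "bounded (g ` closure C)"
    using assms by (intro compact_imp_bounded compact_continuous_image)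
      (auto intro: continuous_on_subset simp: compact_closure)
  then obtain B where "\<forall>x\<in>g ` closure C. \<bar>x\<bar> \<le> B"
    by (meson bounded_real)
  then show ?thesis
    by (meson closure_subset image_eqI subsetD)
qed

lemma integrable_indicator_bounded:
  fixes g :: "'a \<Rightarrow> real"
  assumes "A \<in> sets M" "emeasure M A < \<infinity>" "g \<in> borel_measurable M" "\<forall>z\<in>A. \<bar>g z\<bar> \<le> B"
  shows "integrable M (\<lambda>z. indicator A z * g z)"
proof (rule Bochner_Integration.integrable_bound[where f="\<lambda>z. B * indicator A z"])
  show "integrable M (\<lambda>z. B * indicator A z)"
    using assms(1,2) by (intro integrable_mult_right integrable_real_indicator) auto
  show "(\<lambda>z. indicator A z * g z) \<in> borel_measurable M"
    using assms(1,3) by measurable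
  show "AE x in M. norm (indicator A x * g x) \<le> norm (B * indicator A x)"
    using assms(4) by (intro AE_I2) (auto simp: indicator_def)
qed

section \<open>Functions read off an assignment\<close>

text \<open>It is written as a finite sum over the cells so that its measurability and
  integrability only require measurability of the cells of f, not of f itself.\<close>

definition assign_fun :: "nat set \<Rightarrow> (nat \<Rightarrow> 'b) \<Rightarrow> 'a set \<Rightarrow> ('a \<Rightarrow> 'b) \<Rightarrow> (nat \<Rightarrow> 'a \<Rightarrow> real) \<Rightarrow> 'a \<Rightarrow> real" where
  "assign_fun I p C f g z = (\<Sum>i\<in>I. indicator {x\<in>C. f x = p i} z * g i z)"

lemma assign_fun_at:
  assumes "finite I" "inj_on p I" "k \<in> I" "z \<in> C" "f z = p k"
  shows "assign_fun I p C f g z = g k z"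
proof -
  have "assign_fun I p C f g z = (\<Sum>i\<in>I. if i = k then g i z else 0)"
    unfolding assign_fun_def
    using assms(2-5) by (intro sum.cong) (auto simp: indicator_def dest: inj_onD)
  then show ?thesis
    using assms(1,3) by simp
qed

lemma assign_fun_outside: "z \<notin> C \<Longrightarrow> assign_fun I p C f g z = 0"
  unfolding assign_fun_def by simp

lemma integrable_assign_fun:
  assumes "finite I"
    and "\<And>i. i \<in> I \<Longrightarrow> {x\<in>C. f x = p i} \<in> sets M"
    and "\<And>i. i \<in> I \<Longrightarrow> emeasure M {x\<in>C. f x = p i} < \<infinity>"
    and "\<And>i. i \<in> I \<Longrightarrow> g i \<in> borel_measurable M"
    and "\<And>i. i \<in> I \<Longrightarrow> \<forall>z\<in>C. \<bar>g i z\<bar> \<le> B i"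
  shows "integrable M (assign_fun I p C f g)"
  unfolding assign_fun_def[abs_def]
proof (rule Bochner_Integration.integrable_sum)
  fix i assume "i \<in> I"
  then show "integrable M (\<lambda>z. indicator {x\<in>C. f x = p i} z * g i z)"
    using assms(2-5) by (intro integrable_indicator_bounded[where B="B i"]) auto
qed

lemma integral_assign_fun_const:
  assumes "finite I"
    and "\<And>i. i \<in> I \<Longrightarrow> {x\<in>C. f x = p i} \<in> sets M"
    and "\<And>i. i \<in> I \<Longrightarrow> emeasure M {x\<in>C. f x = p i} < \<infinity>"
  shows "integral\<^sup>L M (assign_fun I p C f (\<lambda>i _. c i)) = (\<Sum>i\<in>I. measure M {x\<in>C. f x = p i} * c i)"
  unfolding assign_fun_def[abs_def] using assms
  by (subst Bochner_Integration.integral_sum) auto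

section \<open>The optimality argument\<close>

locale weighted_assignment =
  fixes \<mu> :: "'a::euclidean_space measure"
    and p :: "nat \<Rightarrow> 'a" and n :: nat
    and D :: "'a \<Rightarrow> 'a \<Rightarrow> real"
    and C :: "'a set" and lam w :: "nat \<Rightarrow> real" and fw :: "'a \<Rightarrow> 'a"
  assumes sets_mu: "sets \<mu> = sets lebesgue"
    and abs_cont: "null_sets \<mu> = null_sets lebesgue"
    and inj: "inj_on p {1..n}"
    and D_cont: "\<And>i. i \<in> {1..n} \<Longrightarrow> continuous_on UNIV (D (p i))"
    and D_nonneg: "\<And>i z. i \<in> {1..n} \<Longrightarrow> D (p i) z \<ge> 0"
    and C_bdd: "bounded C" and C_open: "open C"
    and lam_pos: "\<And>i. i \<in> {1..n} \<Longrightarrow> lam i > 0"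
    and lam_sum: "emeasure \<mu> C = ennreal (\<Sum>i\<in>{1..n}. lam i)"
    and w_cells: "\<And>i. i \<in> {1..n} \<Longrightarrow> emeasure \<mu> (C \<inter> VR D p n w i) = ennreal (lam i)"
    and fw_cells: "\<And>i z. i \<in> {1..n} \<Longrightarrow> z \<in> C \<inter> VR D p n w i \<Longrightarrow> fw z = p i"
    and fw_rest: "\<And>z. z \<in> C \<inter> Vw D p n w \<Longrightarrow>
        \<exists>i\<in>{1..n}. fw z = p i \<and> (\<forall>j\<in>{1..n}. D (p i) z - w i \<le> D (p j) z - w j)"
begin

abbreviation cost_fun :: "('a \<Rightarrow> 'a) \<Rightarrow> 'a \<Rightarrow> real" where
  "cost_fun f \<equiv> assign_fun {1..n} p C f (\<lambda>i. D (p i))"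

abbreviation weight_fun :: "('a \<Rightarrow> 'a) \<Rightarrow> 'a \<Rightarrow> real" where
  "weight_fun f \<equiv> assign_fun {1..n} p C f (\<lambda>i _. w i)"

abbreviation reduced_cost :: "('a \<Rightarrow> 'a) \<Rightarrow> 'a \<Rightarrow> real" where
  "reduced_cost f z \<equiv> cost_fun f z - weight_fun f z"

lemma C_sets: "C \<in> sets \<mu>"
  using C_open sets_mu by simp

lemma VR_sets:
  assumes "i \<in> {1..n}"
  shows "VR D p n w i \<in> sets \<mu>"
  using open_VR[where D=D and p=p and w=w, OF D_cont assms] sets_mu by simp

lemma boundary_null: "C \<inter> Vw D p n w \<in> null_sets \<mu>"
proof -
  have "emeasure \<mu> C = (\<Sum>i\<in>{1..n}. ennreal (lam i))"
    using lam_sum lam_pos by (subst sum_ennreal) (auto intro: less_imp_le)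
  also have "\<dots> = (\<Sum>i\<in>{1..n}. emeasure \<mu> (C \<inter> VR D p n w i))"
    using w_cells by simp
  finally have full: "emeasure \<mu> C = (\<Sum>i\<in>{1..n}. emeasure \<mu> (C \<inter> VR D p n w i))" .
  have disj: "disjoint_family_on (\<lambda>i. C \<inter> VR D p n w i) {1..n}"
    unfolding disjoint_family_on_def using VR_disjoint[of _ n _ D p w] by blast
  have fin: "emeasure \<mu> C < \<infinity>"
    using lam_sum by simp
  have "C - (\<Union>i\<in>{1..n}. C \<inter> VR D p n w i) \<in> null_sets \<mu>"
    using C_sets VR_sets by (intro null_set_outside_full_cells[OF _ C_sets fin _ _ disj full]) auto
  moreover have "C \<inter> Vw D p n w = C - (\<Union>i\<in>{1..n}. C \<inter> VR D p n w i)"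
    unfolding Vw_def by auto
  ultimately show ?thesis by simp
qed

lemma fw_minimizer:
  assumes "z \<in> C"
  shows "\<exists>k\<in>{1..n}. fw z = p k \<and> (\<forall>j\<in>{1..n}. D (p k) z - w k \<le> D (p j) z - w j)"
proof (cases "z \<in> Vw D p n w")
  case True
  then show ?thesis using fw_rest assms by blast
next
  case False
  then obtain k where k: "k \<in> {1..n}" "z \<in> VR D p n w k"
    unfolding Vw_def by blast
  then have "fw z = p k"
    using fw_cells assms by blast
  then show ?thesis
    using k VR_minimal[OF k(2)] by blast
qed

lemma fw_cell_split:
  assumes "i \<in> {1..n}"
  shows "{z\<in>C. fw z = p i} = (C \<inter> VR D p n w i) \<union> ({z\<in>C. fw z = p i} \<inter> Vw D p n w)"
proof -
  have "z \<in> VR D p n w i" if zC: "z \<in> C" and zi: "fw z = p i" and zV: "z \<notin> Vw D p n w" for z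
  proof -
    obtain k where k: "k \<in> {1..n}" "z \<in> VR D p n w k"
      using zV unfolding Vw_def by blast
    then have "p k = p i"
      using fw_cells zC zi by auto
    then have "k = i"
      by (rule inj_onD[OF inj _ k(1) assms])
    then show ?thesis
      using k(2) by simp
  qed
  then show ?thesis
    using fw_cells[OF assms] by blast
qed

lemma fw_in_F_Lambda: "fw \<in> F_Lambda \<mu> C p n lam"
  unfolding F_Lambda_def
proof (intro CollectI conjI ballI)
  fix z assume "z \<in> C"
  then show "fw z \<in> p ` {1..n}"
    using fw_minimizer by blast
next
  fix i assume i: "i \<in> {1..n}"
  have null: "{z\<in>C. fw z = p i} \<inter> Vw D p n w \<in> null_sets \<mu>"
    by (rule null_subset_lebesgue_like[OF sets_mu abs_cont boundary_null]) auto
  have cell: "C \<inter> VR D p n w i \<in> sets \<mu>"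
    using C_sets VR_sets[OF i] by blast
  show "{z\<in>C. fw z = p i} \<in> sets \<mu>"
    using null cell by (subst fw_cell_split[OF i]) auto
  show "emeasure \<mu> {z\<in>C. fw z = p i} = ennreal (lam i)"
    using null cell w_cells[OF i] by (subst fw_cell_split[OF i]) (simp add: emeasure_Un_null_set)
qed

lemma F_Lambda_cell:
  assumes "f \<in> F_Lambda \<mu> C p n lam" "i \<in> {1..n}"
  shows "{z\<in>C. f z = p i} \<in> sets \<mu>" "emeasure \<mu> {z\<in>C. f z = p i} = ennreal (lam i)"
  using assms unfolding F_Lambda_def by auto

lemma F_Lambda_site:
  assumes "f \<in> F_Lambda \<mu> C p n lam" "z \<in> C"
  obtains i where "i \<in> {1..n}" "f z = p i"
  using assms unfolding F_Lambda_def by auto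

lemma assign_fun_site:
  assumes "k \<in> {1..n}" "z \<in> C" "f z = p k"
  shows "assign_fun {1..n} p C f g z = g k z"
  using assign_fun_at[of "{1..n}" p k z C f g] inj assms by simp

lemma integrable_cost_fun:
  assumes "f \<in> F_Lambda \<mu> C p n lam"
  shows "integrable \<mu> (cost_fun f)"
proof -
  have "\<exists>B. \<forall>z\<in>C. \<bar>D (p i) z\<bar> \<le> B" if "i \<in> {1..n}" for i
    using continuous_bounded_on_bounded[OF C_bdd D_cont[OF that]] .
  then obtain B where "\<And>i. i \<in> {1..n} \<Longrightarrow> \<forall>z\<in>C. \<bar>D (p i) z\<bar> \<le> B i"
    by metis
  then show ?thesis
    using F_Lambda_cell[OF assms] D_cont borel_measurable_continuous_lebesgue_like[OF sets_mu]
    by (intro integrable_assign_fun[where B=B]) auto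
qed

lemma cost_fun_nonneg: "0 \<le> cost_fun f z"
  unfolding assign_fun_def using D_nonneg by (intro sum_nonneg mult_nonneg_nonneg) auto

lemma cost_eq_integral:
  assumes "f \<in> F_Lambda \<mu> C p n lam"
  shows "cost \<mu> D C f = ennreal (integral\<^sup>L \<mu> (cost_fun f))"
proof -
  have "ennreal (D (f z) z) * indicator C z = ennreal (cost_fun f z)" for z
  proof (cases "z \<in> C")
    case True
    then obtain k where k: "k \<in> {1..n}" "f z = p k"
      using F_Lambda_site[OF assms] by blast
    then show ?thesis
      using True assign_fun_site[where f=f, OF k(1) True k(2)] by simp
  qed (simp add: assign_fun_outside)
  then have "cost \<mu> D C f = (\<integral>\<^sup>+ z. ennreal (cost_fun f z) \<partial>\<mu>)"
    unfolding cost_def by (intro nn_integral_cong) simp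
  also have "\<dots> = ennreal (integral\<^sup>L \<mu> (cost_fun f))"
    using integrable_cost_fun[OF assms] cost_fun_nonneg
    by (intro nn_integral_eq_integral) auto
  finally show ?thesis .
qed

lemma integrable_weight_fun:
  assumes "f \<in> F_Lambda \<mu> C p n lam"
  shows "integrable \<mu> (weight_fun f)"
  using F_Lambda_cell[OF assms]
  by (intro integrable_assign_fun[where B="\<lambda>i. \<bar>w i\<bar>"]) auto

lemma integral_weight_fun:
  assumes "f \<in> F_Lambda \<mu> C p n lam"
  shows "integral\<^sup>L \<mu> (weight_fun f) = (\<Sum>i\<in>{1..n}. lam i * w i)"
proof -
  have "measure \<mu> {z\<in>C. f z = p i} = lam i" if "i \<in> {1..n}" for i
    using F_Lambda_cell(2)[OF assms that] lam_pos[OF that] by (simp add: measure_def)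
  then show ?thesis
    using F_Lambda_cell[OF assms] by (subst integral_assign_fun_const) auto
qed

lemma reduced_cost_at:
  assumes "k \<in> {1..n}" "z \<in> C" "f z = p k"
  shows "reduced_cost f z = D (p k) z - w k"
  using assign_fun_site[where f=f, OF assms] by simp

lemma reduced_cost_fw_le:
  assumes "f \<in> F_Lambda \<mu> C p n lam"
  shows "reduced_cost fw z \<le> reduced_cost f z"
proof (cases "z \<in> C")
  case True
  obtain i where i: "i \<in> {1..n}" "f z = p i"
    using F_Lambda_site[OF assms True] by blast
  obtain k where k: "k \<in> {1..n}" "fw z = p k" "\<forall>j\<in>{1..n}. D (p k) z - w k \<le> D (p j) z - w j"
    using fw_minimizer[OF True] by blast
  show ?thesis
    using reduced_cost_at[where f=f, OF i(1) True i(2)] reduced_cost_at[where f=fw, OF k(1) True k(2)] k(3) i(1) by simp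
qed (simp add: assign_fun_outside)

lemma reduced_cost_eq_imp_fw:
  assumes "f \<in> F_Lambda \<mu> C p n lam" "z \<in> C" "z \<notin> Vw D p n w"
    and eq: "reduced_cost f z = reduced_cost fw z"
  shows "f z = fw z"
proof -
  obtain k where k: "k \<in> {1..n}" "z \<in> VR D p n w k"
    using assms(3) unfolding Vw_def by blast
  then have fw_k: "fw z = p k"
    using fw_cells assms(2) by blast
  obtain i where i: "i \<in> {1..n}" "f z = p i"
    using F_Lambda_site[OF assms(1,2)] by blast
  have "D (p i) z - w i \<le> D (p k) z - w k"
    using eq reduced_cost_at[where f=f, OF i(1) assms(2) i(2)] reduced_cost_at[where f=fw, OF k(1) assms(2) fw_k] by simp
  then have "i = k"
    by (rule VR_unique_minimizer[OF k(2) i(1)])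
  then show ?thesis
    using i(2) fw_k by simp
qed

text \<open>Since the weight integrals coincide, the cost difference is the integral of the reduced
  cost gap.\<close>

lemma reduced_cost_gap:
  assumes "f \<in> F_Lambda \<mu> C p n lam"
  shows "integrable \<mu> (\<lambda>z. reduced_cost f z - reduced_cost fw z)"
    and "integral\<^sup>L \<mu> (\<lambda>z. reduced_cost f z - reduced_cost fw z)
           = integral\<^sup>L \<mu> (cost_fun f) - integral\<^sup>L \<mu> (cost_fun fw)"
  using integrable_cost_fun[OF assms] integrable_cost_fun[OF fw_in_F_Lambda]
    integrable_weight_fun[OF assms] integrable_weight_fun[OF fw_in_F_Lambda]
    integral_weight_fun[OF assms] integral_weight_fun[OF fw_in_F_Lambda]
  by simp_all

lemma integral_cost_fun_nonneg: "0 \<le> integral\<^sup>L \<mu> (cost_fun f)"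
  using cost_fun_nonneg by (intro integral_nonneg_AE) simp

theorem fw_optimal:
  assumes "f \<in> F_Lambda \<mu> C p n lam"
  shows "cost \<mu> D C fw \<le> cost \<mu> D C f"
proof -
  have "0 \<le> integral\<^sup>L \<mu> (\<lambda>z. reduced_cost f z - reduced_cost fw z)"
    using reduced_cost_fw_le[OF assms] by (intro integral_nonneg_AE) simp
  then have "integral\<^sup>L \<mu> (cost_fun fw) \<le> integral\<^sup>L \<mu> (cost_fun f)"
    using reduced_cost_gap(2)[OF assms] by simp
  then show ?thesis
    using cost_eq_integral[OF assms] cost_eq_integral[OF fw_in_F_Lambda] by (simp add: ennreal_leI)
qed

theorem fw_unique_ae:
  assumes F: "f \<in> F_Lambda \<mu> C p n lam" and same_cost: "cost \<mu> D C f = cost \<mu> D C fw"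
  shows "AE z in \<mu>. z \<in> C \<longrightarrow> f z = fw z"
proof -
  have "integral\<^sup>L \<mu> (cost_fun f) = integral\<^sup>L \<mu> (cost_fun fw)"
    using same_cost cost_eq_integral[OF F] cost_eq_integral[OF fw_in_F_Lambda]
      integral_cost_fun_nonneg by simp
  then have "AE z in \<mu>. reduced_cost f z - reduced_cost fw z = 0"
    using integral_nonneg_eq_0_iff_AE[OF reduced_cost_gap(1)[OF F]] reduced_cost_gap(2)[OF F]
      reduced_cost_fw_le[OF F] by simp
  moreover have "AE z in \<mu>. z \<notin> C \<inter> Vw D p n w"
    using boundary_null by (rule AE_not_in)
  ultimately show ?thesis
    by eventually_elim (use reduced_cost_eq_imp_fw[OF F] in auto)
qed

end

theorem theorem2:
  fixes \<mu> :: "'a::euclidean_space measure"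
    and p :: "nat \<Rightarrow> 'a" and n :: nat
    and D :: "'a \<Rightarrow> 'a \<Rightarrow> real"
    and C :: "'a set" and lam w :: "nat \<Rightarrow> real" and fw :: "'a \<Rightarrow> 'a"
  assumes sets_mu: "sets \<mu> = sets lebesgue"
    and abs_cont: "null_sets \<mu> = null_sets lebesgue"
    and inj: "inj_on p {1..n}"
    and D_cont: "\<And>i. i \<in> {1..n} \<Longrightarrow> continuous_on UNIV (D (p i))"
    and D_nonneg: "\<And>i z. i \<in> {1..n} \<Longrightarrow> D (p i) z \<ge> 0"
    and adm: "admissible \<mu> (p ` {1..n}) D"
    and C_bdd: "bounded C" and C_open: "open C"
    and lam_pos: "\<And>i. i \<in> {1..n} \<Longrightarrow> lam i > 0"
    and lam_sum: "emeasure \<mu> C = ennreal (\<Sum>i\<in>{1..n}. lam i)"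
    and w_cells: "\<And>i. i \<in> {1..n} \<Longrightarrow> emeasure \<mu> (C \<inter> VR D p n w i) = ennreal (lam i)"
    and fw_cells: "\<And>i z. i \<in> {1..n} \<Longrightarrow> z \<in> C \<inter> VR D p n w i \<Longrightarrow> fw z = p i"
    and fw_rest: "\<And>z. z \<in> C \<inter> Vw D p n w \<Longrightarrow>
        \<exists>i\<in>{1..n}. fw z = p i \<and> (\<forall>j\<in>{1..n}. D (p i) z - w i \<le> D (p j) z - w j)"
  shows "fw \<in> F_Lambda \<mu> C p n lam
    \<and> (\<forall>f\<in>F_Lambda \<mu> C p n lam. cost \<mu> D C fw \<le> cost \<mu> D C f)
    \<and> (\<forall>f\<in>F_Lambda \<mu> C p n lam. cost \<mu> D C f = cost \<mu> D C fw \<longrightarrow>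
          (AE z in \<mu>. z \<in> C \<longrightarrow> f z = fw z))"
proof -
  interpret weighted_assignment \<mu> p n D C lam w fw
    using sets_mu abs_cont inj D_cont D_nonneg C_bdd C_open lam_pos lam_sum w_cells fw_cells fw_rest
    by unfold_locales
  show ?thesis
    using fw_in_F_Lambda fw_optimal fw_unique_ae by blast
qed

end
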